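(* Let $I\subset\mathbb{N}^{d}$ be a finite nonempty set of multi-indices which is closed under the componentwise minimum, i.e. $i,j\in I$ implies $i\wedge j\in I$ where $(i\wedge j)_k=\min\{i_k,j_k\}$. Then the general coefficient problem for $I$ has exactly one solution, and it is given by hierarchical coefficients $w_i=1$ for all $i\in I{\downarrow}$. That is: there exists a unique family of real coefficients $(c_i)_{i\in I}$ with $\sum_{j\in I,\,j\ge i}c_j=1$ for every $i\in I{\downarrow}$, and this family is the unique maximiser of the general coefficient problem for $I$.
   Context: For multi-indices $i,j\in\mathbb{N}^d$, $i\le j$ means $i_k\le j_k$ for all $k=1,\dots,d$, and $\|i\|_1=\sum_k i_k$. For a finite $I\subset\mathbb{N}^d$, $I{\downarrow}:=\{i\in\mathbb{N}^d:\exists j\in I\text{ with } i\le j\}$. Given real coefficients $(c_i)_{i\in I}$, their hierarchical coefficients are $w_i:=\sum_{j\in I,\ j\ge i}c_j$ for $i\in I{\downarrow}$. The general coefficient problem (GCP) for $I$ is: among all families $(c_i)_{i\in I}$ of reals whose hierarchical coefficients satisfy $w_i\in\{0,1\}$ for every $i\in I{\downarrow}$, maximise $Q'(w):=\sum_{i\in I{\downarrow}}4^{-\|i\|_1}w_i$. (Equivalently, extending $c_i:=0$ for $i\in I{\downarrow}\setminus I$, $w=Mc$ with $M$ the $0/1$ matrix $M_{ij}=[j\ge i]$ on $I{\downarrow}$, and the GCP is a maximisation over binary $w$ on $I{\downarrow}$ subject to $(M^{-1}w)_i=0$ for $i\in I{\downarrow}\setminus I$.) A solution of the GCP is a maximising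 family $(c_i)_{i\in I}$. *)

theory Defs
  imports Complex_Main
begin

text \<open>Multi-indices in N^d are represented as functions nat \<Rightarrow> nat vanishing
  from coordinate d on. The order on functions is the pointwise order, and
  inf is the pointwise minimum.\<close>

definition multi_indices :: "nat \<Rightarrow> (nat \<Rightarrow> nat) set" where
  "multi_indices d = {i. \<forall>k\<ge>d. i k = 0}"

definition norm1 :: "nat \<Rightarrow> (nat \<Rightarrow> nat) \<Rightarrow> nat" where
  "norm1 d i = (\<Sum>k<d. i k)"

definition down_closure :: "(nat \<Rightarrow> nat) set \<Rightarrow> (nat \<Rightarrow> nat) set" where
  "down_closure I = {i. \<exists>j\<in>I. i \<le> j}"

text \<open>A family (c_i)_{i in I} is represented by a function vanishing outside I.\<close>
definition family_on :: "(nat \<Rightarrow> nat) set \<Rightarrow> ((nat \<Rightarrow> nat) \<Rightarrow> real) \<Rightarrow> bool" where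
  "family_on I c \<longleftrightarrow> (\<forall>i. i \<notin> I \<longrightarrow> c i = 0)"

definition hier_coeff :: "(nat \<Rightarrow> nat) set \<Rightarrow> ((nat \<Rightarrow> nat) \<Rightarrow> real) \<Rightarrow> (nat \<Rightarrow> nat) \<Rightarrow> real" where
  "hier_coeff I c i = (\<Sum>j\<in>{j\<in>I. i \<le> j}. c j)"

definition gcp_feasible :: "(nat \<Rightarrow> nat) set \<Rightarrow> ((nat \<Rightarrow> nat) \<Rightarrow> real) \<Rightarrow> bool" where
  "gcp_feasible I c \<longleftrightarrow> family_on I c \<and>
     (\<forall>i\<in>down_closure I. hier_coeff I c i = 0 \<or> hier_coeff I c i = 1)"

definition gcp_objective :: "nat \<Rightarrow> (nat \<Rightarrow> nat) set \<Rightarrow> ((nat \<Rightarrow> nat) \<Rightarrow> real) \<Rightarrow> real" where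
  "gcp_objective d I c = (\<Sum>i\<in>down_closure I. (1/4) ^ norm1 d i * hier_coeff I c i)"

definition gcp_solution :: "nat \<Rightarrow> (nat \<Rightarrow> nat) set \<Rightarrow> ((nat \<Rightarrow> nat) \<Rightarrow> real) \<Rightarrow> bool" where
  "gcp_solution d I c \<longleftrightarrow> gcp_feasible I c \<and>
     (\<forall>c'. gcp_feasible I c' \<longrightarrow> gcp_objective d I c' \<le> gcp_objective d I c)"

end

theory Submission
  imports Defs
begin

text \<open>
  For a finite subset S of a partial order, the "upper sum" transform
  c \<mapsto> (i \<mapsto> \<Sum>{c j | j \<in> S, i \<le> j}) is a bijection between families supported on S
  and functions on S (Moebius inversion): a solution is built by peeling off a
  minimal element, and it is unique because a nonzero family has a nonzero upper
  sum at a maximal point of its support.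
  If S is moreover closed under binary infima, every nonempty upper section
  {j \<in> S. i \<le> j} has a least element m \<in> S, so the upper sum at any i below S
  coincides with the upper sum at m \<in> S. Hence the all-ones equations on the whole
  down-closure reduce to the equations on S, which have exactly one solution.
  Finally, every feasible family of the general coefficient problem has
  hierarchical coefficients \<le> 1, and all weights 4^(-|i|) are positive, so a family
  is optimal exactly when all its hierarchical coefficients equal 1.
\<close>

definition upper_sum :: "'a::order set \<Rightarrow> ('a \<Rightarrow> 'b::comm_monoid_add) \<Rightarrow> 'a \<Rightarrow> 'b" where
  "upper_sum S c i = (\<Sum>j\<in>{j\<in>S. i \<le> j}. c j)"

lemma hier_coeff_eq_upper_sum: "hier_coeff I c = upper_sum I c"
  by (simp add: fun_eq_iff hier_coeff_def upper_sum_def)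

lemma upper_sum_solvable:
  fixes S :: "'a::order set" and f :: "'a \<Rightarrow> 'b::ab_group_add"
  assumes "finite S"
  shows "\<exists>c. (\<forall>i. i \<notin> S \<longrightarrow> c i = 0) \<and> (\<forall>i\<in>S. upper_sum S c i = f i)"
  using assms
proof (induction S rule: finite_remove_induct)
  case empty
  show ?case by auto
next
  case (remove S)
  obtain a where a: "a \<in> S" "\<forall>b\<in>S. b \<le> a \<longrightarrow> a = b"
    using finite_has_minimal[OF remove.hyps(1,2)] by blast
  obtain c' where supp': "\<forall>i. i \<notin> S - {a} \<longrightarrow> c' i = 0"
    and sol': "\<forall>i\<in>S - {a}. upper_sum (S - {a}) c' i = f i"
    using remove.IH[OF a(1)] by blast
  text \<open>Only the coefficient at the minimal element a has to be adjusted.\<close>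
  define c where "c = c'(a := f a - upper_sum (S - {a}) c' a)"
  have agree: "upper_sum (S - {a}) c i = upper_sum (S - {a}) c' i" for i
    unfolding upper_sum_def c_def by (intro sum.cong) auto
  have "upper_sum S c i = f i" if i: "i \<in> S" for i
  proof (cases "i = a")
    case True
    have "{j\<in>S. a \<le> j} = insert a {j\<in>S - {a}. a \<le> j}" using a(1) by auto
    then have "upper_sum S c a = c a + upper_sum (S - {a}) c a"
      using remove.hyps(1) by (simp add: upper_sum_def)
    then show ?thesis using True agree by (simp add: c_def)
  next
    case False
    text \<open>a is minimal, so it lies in no upper section of another element.\<close>
    then have "{j\<in>S. i \<le> j} = {j\<in>S - {a}. i \<le> j}" using a i by auto
    then show ?thesis using agree sol' i False by (simp add: upper_sum_def)
  qed
  moreover have "\<forall>i. i \<notin> S \<longrightarrow> c i = 0" using supp' a(1) by (auto simp: c_def)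
  ultimately show ?case by blast
qed

text \<open>Moebius inversion, injectivity: a family supported on a finite set whose
  upper sums all vanish is zero (look at a maximal point of its support).\<close>
lemma upper_sum_zero_imp_zero:
  fixes S :: "'a::order set" and c :: "'a \<Rightarrow> 'b::comm_monoid_add"
  assumes "finite S" and supp: "\<forall>i. i \<notin> S \<longrightarrow> c i = 0"
    and zero: "\<forall>i\<in>S. upper_sum S c i = 0"
  shows "c = (\<lambda>_. 0)"
proof (rule ccontr)
  assume "c \<noteq> (\<lambda>_. 0)"
  then have "{i\<in>S. c i \<noteq> 0} \<noteq> {}" using supp by auto
  then obtain m where m: "m \<in> S" "c m \<noteq> 0"
    and max: "\<forall>b\<in>{i\<in>S. c i \<noteq> 0}. m \<le> b \<longrightarrow> m = b"
    using finite_has_maximal[of "{i\<in>S. c i \<noteq> 0}"] \<open>finite S\<close> by auto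
  have "upper_sum S c m = c m + (\<Sum>j\<in>{j\<in>S. m \<le> j} - {m}. c j)"
    unfolding upper_sum_def using \<open>finite S\<close> m(1) by (intro sum.remove) auto
  also have "(\<Sum>j\<in>{j\<in>S. m \<le> j} - {m}. c j) = 0"
    using max by (intro sum.neutral) auto
  finally have "upper_sum S c m = c m" by simp
  then show False using zero m by simp
qed

lemma upper_sum_unique:
  fixes S :: "'a::order set" and c c' :: "'a \<Rightarrow> 'b::ab_group_add"
  assumes "finite S"
    and "\<forall>i. i \<notin> S \<longrightarrow> c i = 0" and "\<forall>i. i \<notin> S \<longrightarrow> c' i = 0"
    and "\<forall>i\<in>S. upper_sum S c i = upper_sum S c' i"
  shows "c = c'"
proof -
  have "upper_sum S (\<lambda>j. c j - c' j) i = upper_sum S c i - upper_sum S c' i" for i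
    by (simp add: upper_sum_def sum_subtractf)
  then have "(\<lambda>j. c j - c' j) = (\<lambda>_. 0)"
    using assms by (intro upper_sum_zero_imp_zero) auto
  then show ?thesis by (simp add: fun_eq_iff)
qed

lemma upper_section_principal:
  fixes S :: "'a::semilattice_inf set"
  assumes "finite S" and inf_closed: "\<And>x y. x \<in> S \<Longrightarrow> y \<in> S \<Longrightarrow> inf x y \<in> S"
    and "j \<in> S" "i \<le> j"
  shows "\<exists>m\<in>S. {j\<in>S. i \<le> j} = {j\<in>S. m \<le> j}"
proof -
  let ?U = "{j\<in>S. i \<le> j}"
  obtain m where m: "m \<in> ?U" and min: "\<forall>b\<in>?U. b \<le> m \<longrightarrow> m = b"
    using finite_has_minimal[of ?U] assms by auto
  text \<open>m is least: its infimum with any other member is again in the section.\<close>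
  have "m \<le> k" if "k \<in> ?U" for k
  proof -
    have "inf m k \<in> ?U" using that m inf_closed by auto
    then have "m = inf m k" using min by auto
    then show ?thesis by (metis inf.cobounded2)
  qed
  then have "?U = {j\<in>S. m \<le> j}" using m by (auto intro: order_trans)
  then show ?thesis using m by blast
qed

lemma finite_below_multi_index:
  assumes "j \<in> multi_indices d"
  shows "finite {i. i \<le> j}"
proof (rule finite_subset)
  show "{i. i \<le> j} \<subseteq>
      {f. \<forall>x. (x \<in> {..<d} \<longrightarrow> f x \<in> (\<Union>k<d. {..j k})) \<and> (x \<notin> {..<d} \<longrightarrow> f x = 0)}"
  proof (intro subsetI CollectI allI conjI impI)
    fix i x assume "i \<in> {i. i \<le> j}"
    then have below: "i x \<le> j x" by (simp add: le_fun_def)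
    show "i x \<in> (\<Union>k<d. {..j k})" if "x \<in> {..<d}" using below that by blast
    show "i x = 0" if "x \<notin> {..<d}" using below that assms by (simp add: multi_indices_def)
  qed
  show "finite {f. \<forall>x. (x \<in> {..<d} \<longrightarrow> f x \<in> (\<Union>k<d. {..j k})) \<and> (x \<notin> {..<d} \<longrightarrow> f x = (0::nat))}"
    by (rule finite_set_of_finite_funs) auto
qed

lemma finite_down_closure:
  assumes "finite I" "I \<subseteq> multi_indices d"
  shows "finite (down_closure I)"
proof -
  have "down_closure I = (\<Union>j\<in>I. {i. i \<le> j})" by (auto simp: down_closure_def)
  then show ?thesis using assms finite_below_multi_index by auto
qed

lemma all_ones_on_down_closure_iff:
  assumes "finite I" and "\<And>i j. i \<in> I \<Longrightarrow> j \<in> I \<Longrightarrow> inf i j \<in> I"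
  shows "(\<forall>i\<in>down_closure I. hier_coeff I c i = 1) \<longleftrightarrow> (\<forall>i\<in>I. upper_sum I c i = 1)"
proof
  assume "\<forall>i\<in>down_closure I. hier_coeff I c i = 1"
  then show "\<forall>i\<in>I. upper_sum I c i = 1"
    by (auto simp: hier_coeff_eq_upper_sum down_closure_def)
next
  assume ones: "\<forall>i\<in>I. upper_sum I c i = 1"
  show "\<forall>i\<in>down_closure I. hier_coeff I c i = 1"
  proof
    fix i assume "i \<in> down_closure I"
    then obtain j where "j \<in> I" "i \<le> j" by (auto simp: down_closure_def)
    then obtain m where "m \<in> I" "{j\<in>I. i \<le> j} = {j\<in>I. m \<le> j}"
      using upper_section_principal[OF assms] by blast
    then show "hier_coeff I c i = 1"
      using ones by (simp add: hier_coeff_eq_upper_sum upper_sum_def)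
  qed
qed

text \<open>If a family with all hierarchical coefficients equal to 1 exists, the
  solutions of the general coefficient problem are exactly such families:
  feasible coefficients are at most 1 and all weights are positive.\<close>
lemma gcp_solution_iff_all_ones:
  assumes fin: "finite (down_closure I)"
    and ones: "family_on I c1" "\<forall>i\<in>down_closure I. hier_coeff I c1 i = 1"
  shows "gcp_solution d I c \<longleftrightarrow>
    family_on I c \<and> (\<forall>i\<in>down_closure I. hier_coeff I c i = 1)"
proof -
  let ?term = "\<lambda>c i. (1/4::real) ^ norm1 d i * hier_coeff I c i"
  have bounded: "?term c' i \<le> ?term c1 i"
    if "gcp_feasible I c'" "i \<in> down_closure I" for c' i
  proof -
    have "hier_coeff I c' i \<le> hier_coeff I c1 i"
      using that ones by (auto simp: gcp_feasible_def)
    then show ?thesis by (rule mult_left_mono) simp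
  qed
  have feasible1: "gcp_feasible I c1" using ones by (simp add: gcp_feasible_def)
  show ?thesis
  proof
    assume sol: "gcp_solution d I c"
    then have feasible: "gcp_feasible I c" by (simp add: gcp_solution_def)
    have "gcp_objective d I c1 \<le> gcp_objective d I c"
      using sol feasible1 by (simp add: gcp_solution_def)
    moreover have "gcp_objective d I c \<le> gcp_objective d I c1"
      using bounded[OF feasible] unfolding gcp_objective_def by (intro sum_mono) auto
    ultimately have optimal: "(\<Sum>i\<in>down_closure I. ?term c i) = (\<Sum>i\<in>down_closure I. ?term c1 i)"
      unfolding gcp_objective_def by linarith
    have "?term c i = ?term c1 i" if "i \<in> down_closure I" for i
      by (rule sum_mono_inv[OF optimal]) (use bounded[OF feasible] fin that in auto)
    then show "family_on I c \<and> (\<forall>i\<in>down_closure I. hier_coeff I c i = 1)"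
      using sol ones by (simp add: gcp_solution_def gcp_feasible_def)
  next
    assume "family_on I c \<and> (\<forall>i\<in>down_closure I. hier_coeff I c i = 1)"
    then show "gcp_solution d I c"
      using bounded ones unfolding gcp_solution_def gcp_objective_def
      by (auto simp: gcp_feasible_def intro!: sum_mono)
  qed
qed

theorem mainTheorem2:
  fixes d :: nat and I :: "(nat \<Rightarrow> nat) set"
  assumes "finite I" and "I \<noteq> {}" and "I \<subseteq> multi_indices d"
    and "\<And>i j. i \<in> I \<Longrightarrow> j \<in> I \<Longrightarrow> inf i j \<in> I"
  shows "(\<exists>!c. family_on I c \<and> (\<forall>i\<in>down_closure I. hier_coeff I c i = 1))
    \<and> (\<exists>!c. gcp_solution d I c)
    \<and> (\<forall>c. gcp_solution d I c \<longleftrightarrow>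
          family_on I c \<and> (\<forall>i\<in>down_closure I. hier_coeff I c i = 1))"
proof -
  define all_ones where
    "all_ones c \<longleftrightarrow> family_on I c \<and> (\<forall>i\<in>down_closure I. hier_coeff I c i = 1)" for c
  have reduce: "all_ones c \<longleftrightarrow> family_on I c \<and> (\<forall>i\<in>I. upper_sum I c i = 1)" for c
    using all_ones_on_down_closure_iff[OF assms(1,4)] by (simp add: all_ones_def)
  obtain c1 where ones: "all_ones c1"
    using upper_sum_solvable[OF assms(1), of "\<lambda>_. 1"] by (auto simp: reduce family_on_def)
  have unique: "c = c'" if "all_ones c" "all_ones c'" for c c'
    using that by (auto simp: reduce family_on_def intro: upper_sum_unique[OF assms(1)])
  have solution: "gcp_solution d I c \<longleftrightarrow> all_ones c" for c
    using gcp_solution_iff_all_ones[OF finite_down_closure[OF assms(1,3)]] ones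
    unfolding all_ones_def by blast
  have "\<exists>!c. all_ones c" using ones unique by blast
  then show ?thesis using solution unfolding all_ones_def by simp
qed

end
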